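(* Let $G$ be a graph and $L$ an $m$-assignment for $G$. Suppose $uv\in E(G)$, $|L(u)-L(v)|=d\ge 1$, and that for any $x\in L(u)$ and $y\in L(v)$ with $x\ne y$ there are at least $C$ proper $L$-colorings of $G$ that color $u$ with $x$ and $v$ with $y$. Then \[P(G,L)\ge P_{DP}(G,m)+Cd.\]
   Context: An $m$-assignment $L$ assigns to each vertex $w$ a set $L(w)$ of $m$ colors; $P(G,L)$ is the number of proper colorings $f$ of $G$ with $f(w)\in L(w)$ for all $w$. A DP-cover of $G$ is a pair $\mathcal{H}=(L,H)$ where $H$ is a graph and $L:V(G)\to 2^{V(H)}$ such that $\{L(v):v\in V(G)\}$ partitions $V(H)$ into $|V(G)|$ parts, for every edge $uv$ of $G$ the edges of $H$ between $L(u)$ and $L(v)$ form a matching (possibly empty, not necessarily perfect), and every edge of $H$ lies between $L(u)$ and $L(v)$ for some edge $uv\in E(G)$. It is an $m$-fold cover if $|L(v)|=m$ for all $v$. A proper $\mathcal{H}$-coloring is an independent set of $H$ containing exactly one vertex of each $L(v)$; $P_{DP}(G,\mathcal{H})$ is their number, and the DP color function $P_{DP}(G,m)$ is the minimum of $P_{DP}(G,\mathcal{H})$ over all $m$-fold covers $\mathcal{H}$ of $G$. *)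

theory Defs
  imports "HOL-Library.FuncSet"
begin

definition graph :: "'v set \<Rightarrow> 'v set set \<Rightarrow> bool" where
  "graph V E \<longleftrightarrow> finite V \<and>
     (\<forall>e\<in>E. \<exists>x y. e = {x, y} \<and> x \<noteq> y \<and> x \<in> V \<and> y \<in> V)"

definition m_assignment :: "'v set \<Rightarrow> ('v \<Rightarrow> 'c set) \<Rightarrow> nat \<Rightarrow> bool" where
  "m_assignment V L m \<longleftrightarrow> (\<forall>w\<in>V. finite (L w) \<and> card (L w) = m)"

definition proper_L_colorings :: "'v set \<Rightarrow> 'v set set \<Rightarrow> ('v \<Rightarrow> 'c set) \<Rightarrow> ('v \<Rightarrow> 'c) set" where
  "proper_L_colorings V E L =
     {f \<in> Pi\<^sub>E V L. \<forall>x y. {x, y} \<in> E \<longrightarrow> f x \<noteq> f y}"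

definition P_list :: "'v set \<Rightarrow> 'v set set \<Rightarrow> ('v \<Rightarrow> 'c set) \<Rightarrow> nat" where
  "P_list V E L = card (proper_L_colorings V E L)"

definition DP_cover :: "'v set \<Rightarrow> 'v set set \<Rightarrow> ('v \<Rightarrow> 'h set) \<Rightarrow> 'h set \<Rightarrow> 'h set set \<Rightarrow> bool" where
  "DP_cover V E LH VH EH \<longleftrightarrow>
     graph VH EH \<and>
     VH = (\<Union>w\<in>V. LH w) \<and>
     (\<forall>w\<in>V. \<forall>w'\<in>V. w \<noteq> w' \<longrightarrow> LH w \<inter> LH w' = {}) \<and>
     (\<forall>e\<in>EH. \<exists>x y a b. e = {a, b} \<and> {x, y} \<in> E \<and> a \<in> LH x \<and> b \<in> LH y) \<and>
     (\<forall>x y. {x, y} \<in> E \<longrightarrow>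
        (\<forall>a\<in>LH x. \<forall>b\<in>LH y. \<forall>b'\<in>LH y. {a, b} \<in> EH \<and> {a, b'} \<in> EH \<longrightarrow> b = b'))"

definition m_fold_DP_cover :: "'v set \<Rightarrow> 'v set set \<Rightarrow> nat \<Rightarrow> ('v \<Rightarrow> 'h set) \<Rightarrow> 'h set \<Rightarrow> 'h set set \<Rightarrow> bool" where
  "m_fold_DP_cover V E m LH VH EH \<longleftrightarrow>
     DP_cover V E LH VH EH \<and> (\<forall>w\<in>V. finite (LH w) \<and> card (LH w) = m)"

definition DP_colorings :: "'v set \<Rightarrow> ('v \<Rightarrow> 'h set) \<Rightarrow> 'h set \<Rightarrow> 'h set set \<Rightarrow> 'h set set" where
  "DP_colorings V LH VH EH =
     {I. I \<subseteq> VH \<and> (\<forall>a\<in>I. \<forall>b\<in>I. {a, b} \<notin> EH) \<and> (\<forall>w\<in>V. card (I \<inter> LH w) = 1)}"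

definition P_DP_cover :: "'v set \<Rightarrow> ('v \<Rightarrow> 'h set) \<Rightarrow> 'h set \<Rightarrow> 'h set set \<Rightarrow> nat" where
  "P_DP_cover V LH VH EH = card (DP_colorings V LH VH EH)"

text \<open>Cover vertices are taken
  in the type 'v \<times> nat, which loses no generality (every m-fold cover of a finite graph
  is isomorphic to one whose vertex set lies in 'v \<times> nat).\<close>
definition P_DP :: "'v set \<Rightarrow> 'v set set \<Rightarrow> nat \<Rightarrow> nat" where
  "P_DP V E m = Inf {P_DP_cover V LH VH EH | LH VH EH :: ('v \<times> nat) set set.
                        m_fold_DP_cover V E m LH VH EH}"

end

(* Turn L into a DP-cover: colour c at w becomes the cover vertex (w, c), and equal colours
   at adjacent vertices are joined. On the edge uv the colours of L u - L v and L v - L u have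
   no partners yet, so a bijection \<sigma> between these two d-sets may be added as extra matching
   edges. The DP-colourings of the resulting m-fold cover are the proper L-colourings f with
   (f u, f v) \<noteq> (a, \<sigma> a) for all a \<in> L u - L v, and each of these d excluded pairs is
   realised by at least C proper L-colourings, so P(G,L) \<ge> P_DP(G,cover) + C d. *)

theory Submission
  imports Defs
begin

lemma graph_edgeD:
  assumes "graph V E" and "{x, y} \<in> E"
  shows "x \<noteq> y" and "x \<in> V" and "y \<in> V"
proof -
  obtain a b where "{x, y} = {a, b}" "a \<noteq> b" "a \<in> V" "b \<in> V"
    using assms unfolding graph_def by blast
  then show "x \<noteq> y" "x \<in> V" "y \<in> V"
    by (auto simp: doubleton_eq_iff)
qed

lemma P_DP_le_P_DP_cover:
  fixes LH :: "'v \<Rightarrow> ('v \<times> nat) set"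
  assumes "m_fold_DP_cover V E m LH VH EH"
  shows "P_DP V E m \<le> P_DP_cover V LH VH EH"
  unfolding P_DP_def using assms by (blast intro: cInf_lower)

lemma ex_bij_betw_Diff_swap:
  assumes "finite A" "finite B" "card A = card B"
  obtains \<sigma> where "bij_betw \<sigma> (A - B) (B - A)"
proof -
  have "card (A - B) = card (B - A)"
    using assms by (intro le_antisym card_le_sym_Diff) auto
  with assms show ?thesis
    using finite_same_card_bij that by blast
qed

lemma finite_proper_L_colorings:
  assumes "finite V" "\<And>w. w \<in> V \<Longrightarrow> finite (L w)"
  shows "finite (proper_L_colorings V E L)"
  unfolding proper_L_colorings_def
  by (rule finite_subset[OF _ finite_PiE[of V L]]) (use assms in auto)

lemma card_pinned_pairs_ge:
  assumes "finite P" "finite A"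
    and "\<forall>a\<in>A. C \<le> card {f \<in> P. f u = a \<and> f v = \<sigma> a}"
  shows "C * card A \<le> card {f \<in> P. f u \<in> A \<and> f v = \<sigma> (f u)}"
proof -
  have "{f \<in> P. f u \<in> A \<and> f v = \<sigma> (f u)} = (\<Union>a\<in>A. {f \<in> P. f u = a \<and> f v = \<sigma> a})"
    by auto
  moreover have "card (\<Union>a\<in>A. {f \<in> P. f u = a \<and> f v = \<sigma> a})
      = (\<Sum>a\<in>A. card {f \<in> P. f u = a \<and> f v = \<sigma> a})"
    using assms(1,2) by (intro card_UN_disjoint) auto
  moreover have "C * card A \<le> (\<Sum>a\<in>A. card {f \<in> P. f u = a \<and> f v = \<sigma> a})"
    using sum_mono[of A "\<lambda>_. C"] assms(3) by (simp add: mult.commute)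
  ultimately show ?thesis by simp
qed

(* Cover vertices are (w, enc c) rather than (w, c): P_DP only ranges over covers on 'v \<times> nat. *)
locale twisted_cover =
  fixes V :: "'v set" and E :: "'v set set" and L :: "'v \<Rightarrow> 'c set" and m :: nat
    and enc :: "'c \<Rightarrow> 'k" and u v :: 'v and \<sigma> :: "'c \<Rightarrow> 'c"
  assumes graph: "graph V E"
    and assignment: "m_assignment V L m"
    and enc_inj: "inj_on enc (\<Union>(L ` V))"
    and edge_uv: "{u, v} \<in> E"
    and \<sigma>_inj: "inj_on \<sigma> (L u - L v)"
    and \<sigma>_into: "\<sigma> ` (L u - L v) \<subseteq> L v - L u"
begin

definition twisted :: "'v \<Rightarrow> 'c \<Rightarrow> 'v \<Rightarrow> 'c \<Rightarrow> bool" where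
  "twisted x c y c' \<longleftrightarrow>
     (x = u \<and> y = v \<and> c \<in> L u - L v \<and> c' = \<sigma> c) \<or>
     (x = v \<and> y = u \<and> c' \<in> L u - L v \<and> c = \<sigma> c')"

definition conflict :: "'v \<Rightarrow> 'c \<Rightarrow> 'v \<Rightarrow> 'c \<Rightarrow> bool" where
  "conflict x c y c' \<longleftrightarrow> {x, y} \<in> E \<and> (c = c' \<or> twisted x c y c')"

definition LH :: "'v \<Rightarrow> ('v \<times> 'k) set" where
  "LH w = {w} \<times> enc ` L w"

definition VH :: "('v \<times> 'k) set" where
  "VH = (\<Union>w\<in>V. LH w)"

definition EH :: "('v \<times> 'k) set set" where
  "EH = {{(x, enc c), (y, enc c')} | x y c c'.
           x \<in> V \<and> y \<in> V \<and> c \<in> L x \<and> c' \<in> L y \<and> conflict x c y c'}"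

lemma finite_L: "w \<in> V \<Longrightarrow> finite (L w)" and card_L: "w \<in> V \<Longrightarrow> card (L w) = m"
  using assignment unfolding m_assignment_def by auto

lemma uv: "u \<in> V" "v \<in> V" "u \<noteq> v"
  using graph_edgeD[OF graph edge_uv] by auto

lemma conflict_sym: "conflict x c y c' \<longleftrightarrow> conflict y c' x c"
  unfolding conflict_def twisted_def by (auto simp: insert_commute)

lemma enc_eq_iff:
  assumes "w \<in> V" "c \<in> L w" "c' \<in> L w"
  shows "enc c = enc c' \<longleftrightarrow> c = c'"
  using assms inj_onD[OF enc_inj] by auto

lemma EH_cases:
  assumes "e \<in> EH"
  obtains x y c c' where "e = {(x, enc c), (y, enc c')}"
    and "x \<in> V" "y \<in> V" "c \<in> L x" "c' \<in> L y" "conflict x c y c'"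
  using assms unfolding EH_def by blast

lemma EH_iff:
  assumes "x \<in> V" "y \<in> V" "c \<in> L x" "c' \<in> L y"
  shows "{(x, enc c), (y, enc c')} \<in> EH \<longleftrightarrow> conflict x c y c'"
proof
  assume "{(x, enc c), (y, enc c')} \<in> EH"
  then obtain x1 y1 c1 c1' where "{(x, enc c), (y, enc c')} = {(x1, enc c1), (y1, enc c1')}"
    and "x1 \<in> V" "y1 \<in> V" "c1 \<in> L x1" "c1' \<in> L y1" "conflict x1 c1 y1 c1'"
    by (rule EH_cases)
  with assms show "conflict x c y c'"
    unfolding doubleton_eq_iff by (auto simp: enc_eq_iff conflict_sym)
next
  assume "conflict x c y c'"
  with assms show "{(x, enc c), (y, enc c')} \<in> EH"
    unfolding EH_def by blast
qed

lemma conflict_unique: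
  assumes "conflict x c y c1" "conflict x c y c2" "c \<in> L x" "c1 \<in> L y" "c2 \<in> L y"
  shows "c1 = c2"
  using assms uv \<sigma>_into inj_onD[OF \<sigma>_inj] unfolding conflict_def twisted_def by fastforce

lemma graph_H: "graph VH EH"
  unfolding graph_def
proof (intro conjI ballI)
  show "finite VH"
    unfolding VH_def LH_def using graph finite_L by (auto simp: graph_def)
next
  fix e assume "e \<in> EH"
  then obtain x y c c' where "e = {(x, enc c), (y, enc c')}"
    and "x \<in> V" "y \<in> V" "c \<in> L x" "c' \<in> L y" "conflict x c y c'"
    by (rule EH_cases)
  moreover have "x \<noteq> y"
    using graph_edgeD(1)[OF graph] \<open>conflict x c y c'\<close> by (auto simp: conflict_def)
  ultimately show "\<exists>a b. e = {a, b} \<and> a \<noteq> b \<and> a \<in> VH \<and> b \<in> VH"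
    unfolding VH_def LH_def by blast
qed

lemma DP_cover: "DP_cover V E LH VH EH"
  unfolding DP_cover_def
proof (intro conjI graph_H VH_def ballI allI impI)
  show "LH w \<inter> LH w' = {}" if "w \<noteq> w'" for w w'
    using that unfolding LH_def by blast
next
  fix e assume "e \<in> EH"
  then show "\<exists>x y a b. e = {a, b} \<and> {x, y} \<in> E \<and> a \<in> LH x \<and> b \<in> LH y"
    unfolding LH_def by (elim EH_cases) (fastforce simp: conflict_def)
next
  fix x y a b b'
  assume xy: "{x, y} \<in> E" and "a \<in> LH x" "b \<in> LH y" "b' \<in> LH y"
    and ab: "{a, b} \<in> EH \<and> {a, b'} \<in> EH"
  then obtain c c1 c2 where c: "a = (x, enc c)" "b = (y, enc c1)" "b' = (y, enc c2)"
    and L: "c \<in> L x" "c1 \<in> L y" "c2 \<in> L y"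
    unfolding LH_def by blast
  have V: "x \<in> V" "y \<in> V"
    using graph_edgeD[OF graph xy] by auto
  have "conflict x c y c1" "conflict x c y c2"
    using ab c EH_iff[OF V L(1,2)] EH_iff[OF V L(1,3)] by auto
  then show "b = b'"
    using conflict_unique[OF _ _ L] c by simp
qed

lemma m_fold_DP_cover: "m_fold_DP_cover V E m LH VH EH"
proof -
  have "inj_on enc (L w)" if "w \<in> V" for w
    using inj_on_subset[OF enc_inj] that by blast
  then show ?thesis
    unfolding m_fold_DP_cover_def using DP_cover finite_L card_L
    by (simp add: LH_def card_cartesian_product card_image)
qed

definition H_compatible_colorings :: "('v \<Rightarrow> 'c) set" where
  "H_compatible_colorings =
     {f \<in> Pi\<^sub>E V L. \<forall>x y. {x, y} \<in> E \<longrightarrow> \<not> conflict x (f x) y (f y)}"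

definition twisted_colorings :: "('v \<Rightarrow> 'c) set" where
  "twisted_colorings = {f \<in> proper_L_colorings V E L. f u \<in> L u - L v \<and> f v = \<sigma> (f u)}"

lemma H_compatible_colorings_eq:
  "H_compatible_colorings = proper_L_colorings V E L - twisted_colorings"
proof -
  have "(\<forall>x y. {x, y} \<in> E \<longrightarrow> \<not> conflict x (f x) y (f y)) \<longleftrightarrow>
      (\<forall>x y. {x, y} \<in> E \<longrightarrow> f x \<noteq> f y) \<and> \<not> (f u \<in> L u - L v \<and> f v = \<sigma> (f u))" for f
  proof
    assume "\<forall>x y. {x, y} \<in> E \<longrightarrow> \<not> conflict x (f x) y (f y)"
    then show "(\<forall>x y. {x, y} \<in> E \<longrightarrow> f x \<noteq> f y) \<and> \<not> (f u \<in> L u - L v \<and> f v = \<sigma> (f u))"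
      using edge_uv unfolding conflict_def twisted_def by blast
  next
    assume "(\<forall>x y. {x, y} \<in> E \<longrightarrow> f x \<noteq> f y) \<and> \<not> (f u \<in> L u - L v \<and> f v = \<sigma> (f u))"
    then show "\<forall>x y. {x, y} \<in> E \<longrightarrow> \<not> conflict x (f x) y (f y)"
      unfolding conflict_def twisted_def by blast
  qed
  then show ?thesis
    unfolding H_compatible_colorings_def twisted_colorings_def proper_L_colorings_def by blast
qed

lemma finite_proper: "finite (proper_L_colorings V E L)"
  using graph finite_L by (intro finite_proper_L_colorings) (auto simp: graph_def)

lemma card_proper_L_colorings_split:
  "card (proper_L_colorings V E L) = card twisted_colorings + card H_compatible_colorings"
  using card_Int_Diff[OF finite_proper, of twisted_colorings]
  unfolding H_compatible_colorings_eq twisted_colorings_def by (simp add: Int_absorb1)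

lemma card_twisted_colorings_ge:
  assumes "\<forall>x\<in>L u. \<forall>y\<in>L v. x \<noteq> y \<longrightarrow>
      C \<le> card {f \<in> proper_L_colorings V E L. f u = x \<and> f v = y}"
  shows "C * card (L u - L v) \<le> card twisted_colorings"
  unfolding twisted_colorings_def
proof (intro card_pinned_pairs_ge finite_proper ballI)
  show "finite (L u - L v)"
    using finite_L uv by blast
  fix a assume "a \<in> L u - L v"
  then have "a \<in> L u" "\<sigma> a \<in> L v" "a \<noteq> \<sigma> a"
    using \<sigma>_into by auto
  then show "C \<le> card {f \<in> proper_L_colorings V E L. f u = a \<and> f v = \<sigma> a}"
    by (rule assms[rule_format])
qed

lemma DP_coloring_is_graph:
  assumes "I \<in> DP_colorings V LH VH EH"
  shows "\<exists>f \<in> H_compatible_colorings. I = (\<lambda>w. (w, enc (f w))) ` V"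
proof -
  have I: "I \<subseteq> VH" "\<forall>a\<in>I. \<forall>b\<in>I. {a, b} \<notin> EH" "\<forall>w\<in>V. card (I \<inter> LH w) = 1"
    using assms unfolding DP_colorings_def by auto
  have "\<exists>c\<in>L w. I \<inter> LH w = {(w, enc c)}" if "w \<in> V" for w
  proof -
    have "card (I \<inter> LH w) = 1"
      using I(3) that by blast
    then obtain p where p: "I \<inter> LH w = {p}"
      by (rule card_1_singletonE)
    then obtain c where "c \<in> L w" "p = (w, enc c)"
      unfolding LH_def by blast
    with p show ?thesis by blast
  qed
  then obtain g where g: "\<forall>w\<in>V. g w \<in> L w \<and> I \<inter> LH w = {(w, enc (g w))}"
    by (metis bchoice)
  define f where "f = restrict g V"
  have f: "f w \<in> L w" "(w, enc (f w)) \<in> I" if "w \<in> V" for w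
    using g that by (auto simp: f_def)
  have "I = (\<Union>w\<in>V. I \<inter> LH w)"
    using I(1) unfolding VH_def by blast
  also have "\<dots> = (\<Union>w\<in>V. {(w, enc (f w))})"
    using g by (simp add: f_def)
  also have "\<dots> = (\<lambda>w. (w, enc (f w))) ` V"
    by blast
  finally have "I = (\<lambda>w. (w, enc (f w))) ` V" .
  moreover have "f \<in> H_compatible_colorings"
    unfolding H_compatible_colorings_def
  proof (intro CollectI conjI allI impI)
    show "f \<in> Pi\<^sub>E V L"
      using f(1) by (auto simp: f_def)
  next
    fix x y assume "{x, y} \<in> E"
    then have V: "x \<in> V" "y \<in> V"
      using graph_edgeD[OF graph] by auto
    have "{(x, enc (f x)), (y, enc (f y))} \<notin> EH"
      using I(2) f(2) V by blast
    then show "\<not> conflict x (f x) y (f y)"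
      using EH_iff[OF V f(1)[OF V(1)] f(1)[OF V(2)]] by blast
  qed
  ultimately show ?thesis by blast
qed

lemma P_DP_cover_le_card_H_compatible:
  "P_DP_cover V LH VH EH \<le> card H_compatible_colorings"
proof -
  have fin: "finite H_compatible_colorings"
    unfolding H_compatible_colorings_eq using finite_proper by blast
  have "DP_colorings V LH VH EH
      \<subseteq> (\<lambda>f. (\<lambda>w. (w, enc (f w))) ` V) ` H_compatible_colorings"
    using DP_coloring_is_graph by blast
  then have "card (DP_colorings V LH VH EH)
      \<le> card ((\<lambda>f. (\<lambda>w. (w, enc (f w))) ` V) ` H_compatible_colorings)"
    using card_mono finite_imageI[OF fin] by blast
  also have "\<dots> \<le> card H_compatible_colorings"
    using fin by (rule card_image_le)
  finally show ?thesis
    unfolding P_DP_cover_def .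
qed

end

theorem lemma22:
  fixes V :: "'v set" and E :: "'v set set" and L :: "'v \<Rightarrow> 'c set"
    and m d C :: nat and u v :: 'v
  assumes "graph V E"
    and "m_assignment V L m"
    and "{u, v} \<in> E"
    and "card (L u - L v) = d" and "d \<ge> 1"
    and "\<forall>x\<in>L u. \<forall>y\<in>L v. x \<noteq> y \<longrightarrow>
           C \<le> card {f \<in> proper_L_colorings V E L. f u = x \<and> f v = y}"
  shows "P_list V E L \<ge> P_DP V E m + C * d"
proof -
  have finV: "finite V" and L: "\<And>w. w \<in> V \<Longrightarrow> finite (L w) \<and> card (L w) = m"
    using assms(1,2) unfolding graph_def m_assignment_def by auto
  have uv: "u \<in> V" "v \<in> V"
    using graph_edgeD[OF assms(1,3)] by auto
  obtain enc :: "'c \<Rightarrow> nat" where enc: "inj_on enc (\<Union>(L ` V))"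
    using finite_imp_inj_to_nat_seg finV L by (metis finite_UN_I)
  obtain \<sigma> where \<sigma>: "bij_betw \<sigma> (L u - L v) (L v - L u)"
    using ex_bij_betw_Diff_swap L[OF uv(1)] L[OF uv(2)] by metis
  interpret twisted_cover V E L m enc u v \<sigma>
    using assms(1-3) enc \<sigma> by unfold_locales (auto simp: bij_betw_def)
  have "P_DP V E m \<le> card H_compatible_colorings"
    using P_DP_le_P_DP_cover[OF m_fold_DP_cover] P_DP_cover_le_card_H_compatible by simp
  moreover have "C * d \<le> card twisted_colorings"
    using card_twisted_colorings_ge[OF assms(6)] assms(4) by simp
  ultimately show ?thesis
    unfolding P_list_def card_proper_L_colorings_split by linarith
qed

end
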